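(* Let $n\ge 1$ and let ${\rm id}\in S_n$ be the identity permutation. For a pair $(P,Q)$ of standard Young tableaux of a common shape $\lambda\vdash n$, \[ \mathcal{P}({\rm id}\rightarrow P,Q)=\begin{cases}t^{n(\lambda)}\prod_{i=1}^{|\lambda|}\alpha_{P^{(i)}/P^{(i-1)}}(q,t)&\text{if }P=Q,\\ 0&\text{otherwise,}\end{cases} \] where $P^{(i)}$ is the shape of the subtableau of $P$ consisting of entries $\le i$.
   Context: All quantities are rational functions of indeterminates $q,t$. Partitions are Young diagrams in French convention (cells $(x,y)\in\mathbb{Z}_{>0}^2$ with $x\le\lambda_y$), $\lambda'$ the conjugate; for $c=(x,y)\in\lambda$, $a_\lambda(c)=\lambda_y-x$, $\ell_\lambda(c)=\lambda'_x-y$; $n(\kappa)=\sum_{c\in\kappa}\ell_\kappa(c)$, $n'(\kappa)=\sum_{c\in\kappa}a_\kappa(c)$, $n(\rho/\kappa)=n(\rho)-n(\kappa)$, $n'(\rho/\kappa)=n'(\rho)-n'(\kappa)$. $\mathcal{U}(\lambda)$, $\mathcal{D}(\lambda)$: partitions obtained by adding, resp. removing, one cell; $\mathcal{D}^*(\lambda)=\mathcal{D}(\lambda)\cup\{\lambda\}$. For $\kappa\subseteq\rho$, $\mathcal{R}_{\rho/\kappa}$ (resp. $\mathcal{C}_{\rho/\kappa}$): cells of $\kappa$ in a row (resp. column) containing a cell of $\rho/\kappa$. $[i,j]=1-q^it^j$. For $\kappa\lessdot\rho$: $\alpha_{\rho/\kappa}=\prod_{c\in\mathcal{R}_{\rho/\kappa}}\frac{[a_\kappa(c),\ell_\kappa(c)+1]}{[a_\rho(c),\ell_\rho(c)+1]}\prod_{c\in\mathcal{C}_{\rho/\kappa}}\frac{[a_\kappa(c)+1,\ell_\kappa(c)]}{[a_\rho(c)+1,\ell_\rho(c)]}$,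 $\beta_{\rho/\kappa}=1/\alpha_{\rho/\kappa}$. Local probabilities: $\mathcal{P}_\lambda(\lambda\rightarrow\nu)=t^{n(\nu/\lambda)}\alpha_{\nu/\lambda}$; for $\mu\in\mathcal{D}(\lambda)$, $\nu\in\mathcal{U}(\lambda)$, with $A=n'(\lambda/\mu)-n'(\nu/\lambda)$, $B=n(\nu/\lambda)-n(\lambda/\mu)$: $\mathcal{P}_\lambda(\mu\rightarrow\nu)=t^{B-1}\alpha_{\nu/\lambda}\beta_{\lambda/\mu}\frac{(1-q)(1-t)}{(1-q^At^B)(1-q^{A+1}t^{B-1})}$. Growths: for $\sigma\in S_n$, take the $n\times n$ grid with vertices $(i,j)$, $0\le i,j\le n$ (matrix coordinates); square $(i,j)$ has vertices NW $(i-1,j-1)$, NE $(i-1,j)$, SW $(i,j-1)$, SE $(i,j)$ and contains a 1 iff $i=\sigma(j)$. A growth associated with $\sigma$ is a labeling $\Lambda_{ij}$ by partitions with $\Lambda_{ij}\subseteq\Lambda_{i,j+1}$, $\Lambda_{ij}\subseteq\Lambda_{i+1,j}$, $|\Lambda_{ij}|$ = number of squares $(i',j')$ with $i'\le i,j'\le j$ containing a 1. $P(\Lambda)$ (resp. $Q(\Lambda)$) has entry $i$ in the cell $\Lambda_{i,n}/\Lambda_{i-1,n}$ (resp. $\Lambda_{n,i}/\Lambda_{n,i-1}$). A square is of type III if its NE and SW vertices are both $\lambda$, NW vertex $\mu\in\mathcal{D}^*(\lambda)$, SE vertex $\nu\in\mathcal{U}(\lambda)$, and then $\mathcal{P}(\square)=\mathcal{P}_\lambda(\mu\rightarrow\nu)$;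 otherwise $\mathcal{P}(\square)=1$. $\mathcal{P}(\Lambda)=\prod_\square\mathcal{P}(\square)$ and $\mathcal{P}(\sigma\rightarrow P,Q)=\sum\mathcal{P}(\Lambda)$ over growths $\Lambda$ associated with $\sigma$ with $P(\Lambda)=P$, $Q(\Lambda)=Q$. *)

theory Defs
  imports Main "HOL-Combinatorics.Permutations"
begin

text \<open>Young diagrams (French convention) as finite sets of cells (x,y), x = column, y = row,
  both positive.\<close>
type_synonym cell = "nat \<times> nat"
type_synonym diagram = "cell set"

definition is_partition :: "diagram \<Rightarrow> bool" where
  "is_partition la \<longleftrightarrow> finite la \<and>
     (\<forall>x y. (x, y) \<in> la \<longrightarrow> 1 \<le> x \<and> 1 \<le> y) \<and>
     (\<forall>x y x' y'. (x, y) \<in> la \<and> 1 \<le> x' \<and> x' \<le> x \<and> 1 \<le> y' \<and> y' \<le> y \<longrightarrow> (x', y') \<in> la)"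

definition rowlen :: "diagram \<Rightarrow> nat \<Rightarrow> nat" where
  "rowlen la y = card {x. (x, y) \<in> la}"

definition collen :: "diagram \<Rightarrow> nat \<Rightarrow> nat" where
  "collen la x = card {y. (x, y) \<in> la}"

definition arm :: "diagram \<Rightarrow> cell \<Rightarrow> nat" where
  "arm la c = rowlen la (snd c) - fst c"

definition leg :: "diagram \<Rightarrow> cell \<Rightarrow> nat" where
  "leg la c = collen la (fst c) - snd c"

definition nfun :: "diagram \<Rightarrow> nat" where
  "nfun \<kappa> = (\<Sum>c\<in>\<kappa>. leg \<kappa> c)"

definition nprime :: "diagram \<Rightarrow> nat" where
  "nprime \<kappa> = (\<Sum>c\<in>\<kappa>. arm \<kappa> c)"

definition nskew :: "diagram \<Rightarrow> diagram \<Rightarrow> int" where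
  "nskew \<rho> \<kappa> = int (nfun \<rho>) - int (nfun \<kappa>)"

definition nprime_skew :: "diagram \<Rightarrow> diagram \<Rightarrow> int" where
  "nprime_skew \<rho> \<kappa> = int (nprime \<rho>) - int (nprime \<kappa>)"

definition Up :: "diagram \<Rightarrow> diagram set" where
  "Up la = {\<nu>. is_partition \<nu> \<and> la \<subseteq> \<nu> \<and> card (\<nu> - la) = 1}"

definition Down :: "diagram \<Rightarrow> diagram set" where
  "Down la = {\<mu>. is_partition \<mu> \<and> \<mu> \<subseteq> la \<and> card (la - \<mu>) = 1}"

definition Down_star :: "diagram \<Rightarrow> diagram set" where
  "Down_star la = Down la \<union> {la}"

definition Rset :: "diagram \<Rightarrow> diagram \<Rightarrow> cell set" where
  "Rset \<rho> \<kappa> = {c \<in> \<kappa>. \<exists>d \<in> \<rho> - \<kappa>. snd d = snd c}"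

definition Cset :: "diagram \<Rightarrow> diagram \<Rightarrow> cell set" where
  "Cset \<rho> \<kappa> = {c \<in> \<kappa>. \<exists>d \<in> \<rho> - \<kappa>. fst d = fst c}"

definition brk :: "'a::field \<Rightarrow> 'a \<Rightarrow> nat \<Rightarrow> nat \<Rightarrow> 'a" where
  "brk q t i j = 1 - q ^ i * t ^ j"

definition alpha :: "'a::field \<Rightarrow> 'a \<Rightarrow> diagram \<Rightarrow> diagram \<Rightarrow> 'a" where
  "alpha q t \<rho> \<kappa> =
     (\<Prod>c\<in>Rset \<rho> \<kappa>. brk q t (arm \<kappa> c) (leg \<kappa> c + 1) / brk q t (arm \<rho> c) (leg \<rho> c + 1)) *
     (\<Prod>c\<in>Cset \<rho> \<kappa>. brk q t (arm \<kappa> c + 1) (leg \<kappa> c) / brk q t (arm \<rho> c + 1) (leg \<rho> c))"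

definition beta :: "'a::field \<Rightarrow> 'a \<Rightarrow> diagram \<Rightarrow> diagram \<Rightarrow> 'a" where
  "beta q t \<rho> \<kappa> = 1 / alpha q t \<rho> \<kappa>"

text \<open>Local probability \<open>\<P>_la(\<mu> \<rightarrow> \<nu>)\<close>, for \<open>\<mu> \<in> \<D>*(la)\<close>, \<open>\<nu> \<in> \<U>(la)\<close>.\<close>
definition local_prob :: "'a::field \<Rightarrow> 'a \<Rightarrow> diagram \<Rightarrow> diagram \<Rightarrow> diagram \<Rightarrow> 'a" where
  "local_prob q t la \<mu> \<nu> =
    (if \<mu> = la then t powi (nskew \<nu> la) * alpha q t \<nu> la
     else (let A = nprime_skew la \<mu> - nprime_skew \<nu> la;
               B = nskew \<nu> la - nskew la \<mu>
           in t powi (B - 1) * alpha q t \<nu> la * beta q t la \<mu> *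
              ((1 - q) * (1 - t) /
               ((1 - q powi A * t powi B) * (1 - q powi (A + 1) * t powi (B - 1))))))"

definition is_growth :: "nat \<Rightarrow> (nat \<Rightarrow> nat) \<Rightarrow> (nat \<Rightarrow> nat \<Rightarrow> diagram) \<Rightarrow> bool" where
  "is_growth n \<sigma> \<Lambda> \<longleftrightarrow>
     (\<forall>i j. (i > n \<or> j > n) \<longrightarrow> \<Lambda> i j = {}) \<and>
     (\<forall>i\<le>n. \<forall>j\<le>n. is_partition (\<Lambda> i j)) \<and>
     (\<forall>i\<le>n. \<forall>j<n. \<Lambda> i j \<subseteq> \<Lambda> i (j + 1)) \<and>
     (\<forall>i<n. \<forall>j\<le>n. \<Lambda> i j \<subseteq> \<Lambda> (i + 1) j) \<and>
     (\<forall>i\<le>n. \<forall>j\<le>n. card (\<Lambda> i j) =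
        card {(i', j'). 1 \<le> i' \<and> i' \<le> i \<and> 1 \<le> j' \<and> j' \<le> j \<and> i' = \<sigma> j'})"

text \<open>Weight of square (i,j), 1 \<le> i,j \<le> n: NW = \<Lambda>(i-1)(j-1), NE = \<Lambda>(i-1)j,
  SW = \<Lambda> i (j-1), SE = \<Lambda> i j.\<close>
definition square_prob :: "'a::field \<Rightarrow> 'a \<Rightarrow> (nat \<Rightarrow> nat \<Rightarrow> diagram) \<Rightarrow> nat \<Rightarrow> nat \<Rightarrow> 'a" where
  "square_prob q t \<Lambda> i j =
    (let \<mu> = \<Lambda> (i - 1) (j - 1); ne = \<Lambda> (i - 1) j; sw = \<Lambda> i (j - 1); \<nu> = \<Lambda> i j in
     if ne = sw \<and> \<mu> \<in> Down_star ne \<and> \<nu> \<in> Up ne then local_prob q t ne \<mu> \<nu> else 1)"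

definition growth_prob :: "'a::field \<Rightarrow> 'a \<Rightarrow> nat \<Rightarrow> (nat \<Rightarrow> nat \<Rightarrow> diagram) \<Rightarrow> 'a" where
  "growth_prob q t n \<Lambda> = (\<Prod>i\<in>{1..n}. \<Prod>j\<in>{1..n}. square_prob q t \<Lambda> i j)"

text \<open>Tableaux are fillings \<open>(nat \<times> nat) \<Rightarrow> nat\<close>, with value 0 outside the shape.\<close>
definition tabP :: "nat \<Rightarrow> (nat \<Rightarrow> nat \<Rightarrow> diagram) \<Rightarrow> cell \<Rightarrow> nat" where
  "tabP n \<Lambda> c = (if \<exists>i. 1 \<le> i \<and> i \<le> n \<and> c \<in> \<Lambda> i n - \<Lambda> (i - 1) n
                  then (LEAST i. 1 \<le> i \<and> i \<le> n \<and> c \<in> \<Lambda> i n - \<Lambda> (i - 1) n) else 0)"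

definition tabQ :: "nat \<Rightarrow> (nat \<Rightarrow> nat \<Rightarrow> diagram) \<Rightarrow> cell \<Rightarrow> nat" where
  "tabQ n \<Lambda> c = (if \<exists>i. 1 \<le> i \<and> i \<le> n \<and> c \<in> \<Lambda> n i - \<Lambda> n (i - 1)
                  then (LEAST i. 1 \<le> i \<and> i \<le> n \<and> c \<in> \<Lambda> n i - \<Lambda> n (i - 1)) else 0)"

definition perm_prob :: "'a::field \<Rightarrow> 'a \<Rightarrow> nat \<Rightarrow> (nat \<Rightarrow> nat) \<Rightarrow> (cell \<Rightarrow> nat) \<Rightarrow> (cell \<Rightarrow> nat) \<Rightarrow> 'a" where
  "perm_prob q t n \<sigma> P Q =
     (\<Sum>\<Lambda>\<in>{\<Lambda>. is_growth n \<sigma> \<Lambda> \<and> tabP n \<Lambda> = P \<and> tabQ n \<Lambda> = Q}. growth_prob q t n \<Lambda>)"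

definition is_SYT :: "diagram \<Rightarrow> (cell \<Rightarrow> nat) \<Rightarrow> bool" where
  "is_SYT la T \<longleftrightarrow> is_partition la \<and>
     (\<forall>c. c \<notin> la \<longrightarrow> T c = 0) \<and>
     bij_betw T la {1..card la} \<and>
     (\<forall>x y. (x, y) \<in> la \<and> (x + 1, y) \<in> la \<longrightarrow> T (x, y) < T (x + 1, y)) \<and>
     (\<forall>x y. (x, y) \<in> la \<and> (x, y + 1) \<in> la \<longrightarrow> T (x, y) < T (x, y + 1))"

definition subshape :: "(cell \<Rightarrow> nat) \<Rightarrow> nat \<Rightarrow> diagram" where
  "subshape T i = {c. T c \<noteq> 0 \<and> T c \<le> i}"

text \<open>Genericity of (q,t): they behave like independent indeterminates.\<close>
definition generic_qt :: "'a::field \<Rightarrow> 'a \<Rightarrow> bool" where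
  "generic_qt q t \<longleftrightarrow> q \<noteq> 0 \<and> t \<noteq> 0 \<and>
     (\<forall>i j :: int. q powi i * t powi j = 1 \<longrightarrow> i = 0 \<and> j = 0)"

end

theory Submission
  imports Defs
begin

text \<open>For \<open>\<sigma> = id\<close> exactly \<open>min i j\<close> ones lie north-west of the vertex \<open>(i, j)\<close>, so
  monotonicity of a growth and a cardinality count force \<open>\<Lambda> i j = \<Lambda> m m\<close> with \<open>m = min i j\<close>.
  A growth of the identity is therefore determined by its diagonal chain, and both \<open>P(\<Lambda>)\<close>
  and \<open>Q(\<Lambda>)\<close> are the tableau recorded by that chain. Hence \<open>P = Q\<close>, and the only growth
  is \<open>\<Lambda> i j = subshape P (min i j)\<close>. In it the NE and SW vertices of an off-diagonal square have
  different sizes, while a diagonal square is of type III with \<open>\<mu> = \<lambda>\<close> and weight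
  \<open>t\<^bsup>n(\<nu>/\<lambda>)\<^esup> \<alpha>\<^bsub>\<nu>/\<lambda>\<^esub>\<close>; the powers of \<open>t\<close> telescope to \<open>t\<^bsup>n(\<lambda>)\<^esup>\<close>.\<close>

section \<open>Standard Young tableaux\<close>

lemma is_partition_down_closed:
  assumes "is_partition la" "(x, y) \<in> la" "1 \<le> x'" "x' \<le> x" "1 \<le> y'" "y' \<le> y"
  shows "(x', y') \<in> la"
  using assms unfolding is_partition_def by blast

lemma is_partition_pos:
  assumes "is_partition la" "(x, y) \<in> la"
  shows "1 \<le> x" "1 \<le> y"
  using assms unfolding is_partition_def by blast+

lemma is_partition_left_mem:
  assumes "is_partition la" "(Suc x, y) \<in> la" "1 \<le> x"
  shows "(x, y) \<in> la"
  by (rule is_partition_down_closed[OF assms(1,2,3) _ is_partition_pos(2)[OF assms(1,2)] order_refl])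
    simp

lemma is_partition_below_mem:
  assumes "is_partition la" "(x, Suc y) \<in> la" "1 \<le> y"
  shows "(x, y) \<in> la"
  by (rule is_partition_down_closed[OF assms(1,2) is_partition_pos(1)[OF assms(1,2)] order_refl assms(3)])
    simp

lemma SYT_row_mono:
  assumes T: "is_SYT la T" and "x' \<le> x" "1 \<le> x'" "(x, y) \<in> la"
  shows "T (x', y) \<le> T (x, y)"
  using assms(2-)
proof (induction x rule: dec_induct)
  case (step m)
  have "(m, y) \<in> la"
    using is_partition_left_mem[of la m y] T step by (simp add: is_SYT_def)
  moreover have "T (m, y) < T (Suc m, y)"
    using T step.prems \<open>(m, y) \<in> la\<close> by (simp add: is_SYT_def)
  ultimately show ?case
    using step.IH step.prems by simp
qed simp

lemma SYT_col_mono: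
  assumes T: "is_SYT la T" and "y' \<le> y" "1 \<le> y'" "(x, y) \<in> la"
  shows "T (x, y') \<le> T (x, y)"
  using assms(2-)
proof (induction y rule: dec_induct)
  case (step m)
  have "(x, m) \<in> la"
    using is_partition_below_mem[of la x m] T step by (simp add: is_SYT_def)
  moreover have "T (x, m) < T (x, Suc m)"
    using T step.prems \<open>(x, m) \<in> la\<close> by (simp add: is_SYT_def)
  ultimately show ?case
    using step.IH step.prems by simp
qed simp

lemma SYT_mono:
  assumes T: "is_SYT la T" and c: "(x, y) \<in> la"
    and "1 \<le> x'" "x' \<le> x" "1 \<le> y'" "y' \<le> y"
  shows "T (x', y') \<le> T (x, y)"
proof -
  have "(x', y) \<in> la"
    using T c assms(3-) is_partition_down_closed[of la x y x' y] by (simp add: is_SYT_def)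
  then have "T (x', y') \<le> T (x', y)"
    using SYT_col_mono T assms(5,6) by blast
  also have "\<dots> \<le> T (x, y)"
    using SYT_row_mono T c assms(3,4) by blast
  finally show ?thesis .
qed

lemma mem_subshape_iff: "c \<in> subshape T k \<longleftrightarrow> T c \<noteq> 0 \<and> T c \<le> k"
  unfolding subshape_def by (rule mem_Collect_eq)

lemma subshape_mono: "k \<le> k' \<Longrightarrow> subshape T k \<subseteq> subshape T k'"
  by (auto simp: subshape_def)

lemma subshape_0 [simp]: "subshape T 0 = {}"
  by (auto simp: subshape_def)

lemma subshape_subset:
  assumes "is_SYT la T"
  shows "subshape T k \<subseteq> la"
proof
  fix c
  assume "c \<in> subshape T k"
  then have "T c \<noteq> 0"
    by (simp add: mem_subshape_iff)
  then show "c \<in> la"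
    using assms unfolding is_SYT_def by metis
qed

lemma SYT_entry_range:
  assumes "is_SYT la T" "c \<in> la"
  shows "T c \<in> {1..card la}"
  using assms unfolding is_SYT_def by (meson bij_betwE)

lemma SYT_entry_le:
  assumes T: "is_SYT la T"
  shows "T c \<le> card la"
proof (cases "c \<in> la")
  case True
  then show ?thesis
    using SYT_entry_range[OF T] by simp
next
  case False
  then have "T c = 0"
    using T unfolding is_SYT_def by metis
  then show ?thesis
    by simp
qed

lemma is_partition_subshape:
  assumes T: "is_SYT la T"
  shows "is_partition (subshape T k)"
proof -
  have la: "is_partition la"
    using T by (simp add: is_SYT_def)
  have down_closed: "(x', y') \<in> subshape T k"
    if "(x, y) \<in> subshape T k" "1 \<le> x'" "x' \<le> x" "1 \<le> y'" "y' \<le> y" for x y x' y'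
  proof -
    have xy: "(x, y) \<in> la"
      using subshape_subset[OF T] that(1) by blast
    then have "(x', y') \<in> la"
      using is_partition_down_closed[OF la _ that(2-)] by blast
    then have "T (x', y') \<noteq> 0"
      using SYT_entry_range[OF T] by fastforce
    moreover have "T (x', y') \<le> T (x, y)"
      using SYT_mono[OF T xy that(2-)] .
    ultimately show ?thesis
      using that(1) by (simp add: mem_subshape_iff)
  qed
  have "finite (subshape T k)"
    using finite_subset[OF subshape_subset[OF T]] la by (simp add: is_partition_def)
  moreover have "1 \<le> x \<and> 1 \<le> y" if "(x, y) \<in> subshape T k" for x y
    using is_partition_pos[OF la] subshape_subset[OF T] that by blast
  ultimately show ?thesis
    unfolding is_partition_def using down_closed by meson
qed

lemma card_subshape:
  assumes T: "is_SYT la T" and k: "k \<le> card la"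
  shows "card (subshape T k) = k"
proof -
  have bij: "bij_betw T la {1..card la}"
    using T by (simp add: is_SYT_def)
  have "T ` subshape T k = {1..k}"
  proof
    show "T ` subshape T k \<subseteq> {1..k}"
      by (auto simp: subshape_def)
    show "{1..k} \<subseteq> T ` subshape T k"
      using k bij_betw_imp_surj_on[OF bij] by (force simp: subshape_def)
  qed
  then have "bij_betw T (subshape T k) {1..k}"
    using bij_betw_subset[OF bij subshape_subset[OF T]] by blast
  then show ?thesis
    by (simp add: bij_betw_same_card)
qed

lemma subshape_card_eq_shape:
  assumes T: "is_SYT la T"
  shows "subshape T (card la) = la"
  using card_subset_eq[OF _ subshape_subset[OF T]] card_subshape[OF T order_refl] T
  by (simp add: is_SYT_def is_partition_def)

section \<open>Tableaux recorded by chains of diagrams\<close>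

definition chain_tableau :: "nat \<Rightarrow> (nat \<Rightarrow> diagram) \<Rightarrow> cell \<Rightarrow> nat" where
  "chain_tableau n E c =
     (if \<exists>i. 1 \<le> i \<and> i \<le> n \<and> c \<in> E i - E (i - 1)
      then (LEAST i. 1 \<le> i \<and> i \<le> n \<and> c \<in> E i - E (i - 1)) else 0)"

lemma tabP_eq_chain_tableau: "tabP n L = chain_tableau n (\<lambda>i. L i n)"
  by (simp add: fun_eq_iff tabP_def chain_tableau_def)

lemma tabQ_eq_chain_tableau: "tabQ n L = chain_tableau n (\<lambda>j. L n j)"
  by (simp add: fun_eq_iff tabQ_def chain_tableau_def)

lemma chain_tableau_cong:
  assumes "\<And>i. i \<le> n \<Longrightarrow> E i = E' i"
  shows "chain_tableau n E = chain_tableau n E'"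
proof -
  have "(1 \<le> i \<and> i \<le> n \<and> c \<in> E i - E (i - 1)) \<longleftrightarrow> (1 \<le> i \<and> i \<le> n \<and> c \<in> E' i - E' (i - 1))"
    for i c
    using assms[of i] assms[of "i - 1"] by auto
  then show ?thesis
    unfolding chain_tableau_def by (simp only:)
qed

lemma chain_tableau_le: "chain_tableau n E c \<le> n"
proof (cases "\<exists>i. 1 \<le> i \<and> i \<le> n \<and> c \<in> E i - E (i - 1)")
  case True
  then show ?thesis
    unfolding chain_tableau_def if_P[OF True] using LeastI_ex[OF True] by blast
next
  case False
  then show ?thesis
    unfolding chain_tableau_def if_not_P[OF False] by simp
qed

lemma mem_chain_iff_entered:
  assumes mono: "\<And>i. i < k \<Longrightarrow> E i \<subseteq> E (Suc i)" and empty: "E 0 = {}"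
  shows "c \<in> E k \<longleftrightarrow> (\<exists>i. 1 \<le> i \<and> i \<le> k \<and> c \<in> E i - E (i - 1))"
  using mono
proof (induction k)
  case (Suc k)
  have "c \<in> E (Suc k) \<longleftrightarrow> c \<in> E k \<or> c \<in> E (Suc k) - E k"
    using Suc.prems by auto
  also have "\<dots> \<longleftrightarrow> (\<exists>i. 1 \<le> i \<and> i \<le> Suc k \<and> c \<in> E i - E (i - 1))"
    using Suc by (auto simp: le_Suc_eq)
  finally show ?case .
qed (simp add: empty)

lemma subshape_chain_tableau:
  assumes mono: "\<And>i. i < n \<Longrightarrow> E i \<subseteq> E (Suc i)" and empty: "E 0 = {}" and k: "k \<le> n"
  shows "subshape (chain_tableau n E) k = E k"
proof (rule set_eqI)
  fix c
  let ?entry = "\<lambda>i. 1 \<le> i \<and> i \<le> n \<and> c \<in> E i - E (i - 1)"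
  have entered: "c \<in> E m \<longleftrightarrow> (\<exists>i. ?entry i \<and> i \<le> m)" if "m \<le> n" for m
    using mem_chain_iff_entered[of m E c] mono empty that by auto
  show "c \<in> subshape (chain_tableau n E) k \<longleftrightarrow> c \<in> E k"
  proof (cases "\<exists>i. ?entry i")
    case True
    have tableau: "chain_tableau n E c = (LEAST i. ?entry i)"
      using True by (simp only: chain_tableau_def if_P)
    have least: "?entry (LEAST i. ?entry i)"
      using True by (rule LeastI_ex)
    have "(LEAST i. ?entry i) \<le> k \<longleftrightarrow> (\<exists>i. ?entry i \<and> i \<le> k)"
      using least Least_le[of ?entry] by (blast intro: order_trans)
    then show ?thesis
      using tableau least entered[OF k] by (simp add: mem_subshape_iff)
  next
    case False
    then have "chain_tableau n E c = 0"
      by (simp only: chain_tableau_def if_False)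
    then show ?thesis
      using False entered[OF k] unfolding mem_subshape_iff by blast
  qed
qed

lemma filling_eq_if_subshapes_eq:
  assumes "\<And>k. k \<le> n \<Longrightarrow> subshape T k = subshape T' k"
    and "\<And>c. T c \<le> n" and "\<And>c. T' c \<le> n"
  shows "T = T'"
proof
  fix c
  have "T c \<noteq> 0 \<and> T c \<le> k \<longleftrightarrow> T' c \<noteq> 0 \<and> T' c \<le> k" if "k \<le> n" for k
    using assms(1)[OF that] by (metis mem_subshape_iff)
  from this[of "T c"] this[of "T' c"] this[of n] show "T c = T' c"
    using assms(2,3)[of c] by linarith
qed

lemma chain_tableau_subshape:
  assumes "\<And>c. T c \<le> n"
  shows "chain_tableau n (subshape T) = T"
proof (rule filling_eq_if_subshapes_eq[of n])
  fix k
  assume "k \<le> n"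
  then show "subshape (chain_tableau n (subshape T)) k = subshape T k"
    by (intro subshape_chain_tableau) (simp_all add: subshape_mono)
qed (simp_all add: chain_tableau_le assms)

section \<open>Growths of the identity\<close>

lemma card_id_ones_in_rectangle:
  "card {(i', j'). 1 \<le> i' \<and> i' \<le> i \<and> 1 \<le> j' \<and> j' \<le> j \<and> i' = id j'} = min i j"
proof -
  have "{(i', j'). 1 \<le> i' \<and> i' \<le> i \<and> 1 \<le> j' \<and> j' \<le> j \<and> i' = id j'} = (\<lambda>k. (k, k)) ` {1..min i j}"
    by auto
  moreover have "inj (\<lambda>k::nat. (k, k))"
    by (simp add: inj_on_def)
  ultimately show ?thesis
    by (simp add: card_image inj_on_subset)
qed

lemma growth_mono:
  assumes g: "is_growth n \<sigma> L"
    and "i \<le> i'" "i' \<le> n" "j \<le> j'" "j' \<le> n"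
  shows "L i j \<subseteq> L i' j'"
proof -
  have right: "L a b \<subseteq> L a (Suc b)" if "a \<le> n" "b < n" for a b
    using g that unfolding is_growth_def by simp
  have down: "L a b \<subseteq> L (Suc a) b" if "a < n" "b \<le> n" for a b
    using g that unfolding is_growth_def by simp
  have "L i j \<subseteq> L i j'"
    using \<open>j \<le> j'\<close> \<open>j' \<le> n\<close>
  proof (induction j' rule: dec_induct)
    case (step m)
    then show ?case
      using right[of i m] \<open>i \<le> i'\<close> \<open>i' \<le> n\<close> by simp
  qed simp
  also have "\<dots> \<subseteq> L i' j'"
    using \<open>i \<le> i'\<close> \<open>i' \<le> n\<close>
  proof (induction i' rule: dec_induct)
    case (step m)
    then show ?case
      using down[of m j'] \<open>j' \<le> n\<close> by simp
  qed simp
  finally show ?thesis .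
qed

lemma is_growth_partition:
  assumes "is_growth n \<sigma> L" "i \<le> n" "j \<le> n"
  shows "is_partition (L i j)"
  using assms(1) unfolding is_growth_def
proof (elim conjE)
  assume "\<forall>i\<le>n. \<forall>j\<le>n. is_partition (L i j)"
  then show ?thesis
    using assms(2,3) by blast
qed

lemma is_growth_outside:
  assumes "is_growth n \<sigma> L" "n < i \<or> n < j"
  shows "L i j = {}"
  using assms(1) unfolding is_growth_def
proof (elim conjE)
  assume "\<forall>i j. n < i \<or> n < j \<longrightarrow> L i j = {}"
  then show ?thesis
    using assms(2) by blast
qed

lemma card_growth_id:
  assumes "is_growth n id L" "i \<le> n" "j \<le> n"
  shows "card (L i j) = min i j"
proof -
  have "card (L i j) = card {(i', j'). 1 \<le> i' \<and> i' \<le> i \<and> 1 \<le> j' \<and> j' \<le> j \<and> i' = id j'}"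
    using assms(1) unfolding is_growth_def
  proof (elim conjE)
    assume "\<forall>i\<le>n. \<forall>j\<le>n. card (L i j) =
      card {(i', j'). 1 \<le> i' \<and> i' \<le> i \<and> 1 \<le> j' \<and> j' \<le> j \<and> i' = id j'}"
    then show ?thesis
      using assms(2,3) by blast
  qed
  then show ?thesis
    by (simp only: card_id_ones_in_rectangle)
qed

lemma growth_id_eq_diagonal:
  assumes g: "is_growth n id L" and "i \<le> n" "j \<le> n"
  shows "L i j = L (min i j) (min i j)"
proof -
  have "finite (L i j)"
    using is_growth_partition[OF g assms(2,3)] by (simp add: is_partition_def)
  moreover have "L (min i j) (min i j) \<subseteq> L i j"
    using growth_mono[OF g] assms(2,3) by simp
  moreover have "card (L (min i j) (min i j)) = card (L i j)"
    using card_growth_id[OF g] assms(2,3) by simp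
  ultimately have "L (min i j) (min i j) = L i j"
    by (rule card_subset_eq)
  then show ?thesis
    by simp
qed

lemma growth_id_tabP:
  assumes g: "is_growth n id L"
  shows "tabP n L = chain_tableau n (\<lambda>k. L k k)"
  unfolding tabP_eq_chain_tableau
proof (rule chain_tableau_cong)
  fix i
  assume "i \<le> n"
  then show "L i n = L i i"
    using growth_id_eq_diagonal[OF g, of i n] by simp
qed

lemma growth_id_tabQ:
  assumes g: "is_growth n id L"
  shows "tabQ n L = chain_tableau n (\<lambda>k. L k k)"
  unfolding tabQ_eq_chain_tableau
proof (rule chain_tableau_cong)
  fix j
  assume "j \<le> n"
  then show "L n j = L j j"
    using growth_id_eq_diagonal[OF g, of n j] by simp
qed

lemma subshape_tabP_growth_id:
  assumes g: "is_growth n id L" and k: "k \<le> n"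
  shows "subshape (tabP n L) k = L k k"
proof -
  have "L 0 0 = {}"
    using card_growth_id[OF g, of 0 0] is_growth_partition[OF g, of 0 0]
    by (simp add: is_partition_def)
  moreover have "L i i \<subseteq> L (Suc i) (Suc i)" if "i < n" for i
    using growth_mono[OF g, of i "Suc i" i "Suc i"] that by simp
  ultimately show ?thesis
    unfolding growth_id_tabP[OF g] using k by (intro subshape_chain_tableau)
qed

section \<open>The growth of a standard tableau\<close>

definition SYT_growth :: "nat \<Rightarrow> (cell \<Rightarrow> nat) \<Rightarrow> nat \<Rightarrow> nat \<Rightarrow> diagram" where
  "SYT_growth n T i j = (if i \<le> n \<and> j \<le> n then subshape T (min i j) else {})"

lemma is_growth_SYT_growth:
  assumes T: "is_SYT la T" and n: "card la = n"
  shows "is_growth n id (SYT_growth n T)"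
  unfolding is_growth_def
proof (intro conjI allI impI)
  fix i j :: nat
  assume "n < i \<or> n < j"
  then show "SYT_growth n T i j = {}"
    by (auto simp: SYT_growth_def)
next
  fix i j :: nat
  assume ij: "i \<le> n" "j \<le> n"
  then show "is_partition (SYT_growth n T i j)"
    by (simp add: SYT_growth_def is_partition_subshape[OF T])
  show "card (SYT_growth n T i j) =
      card {(i', j'). 1 \<le> i' \<and> i' \<le> i \<and> 1 \<le> j' \<and> j' \<le> j \<and> i' = id j'}"
    unfolding card_id_ones_in_rectangle SYT_growth_def using ij n by (simp add: card_subshape[OF T])
next
  fix i j :: nat
  assume "i \<le> n" "j < n"
  then show "SYT_growth n T i j \<subseteq> SYT_growth n T i (j + 1)"
    by (simp add: SYT_growth_def subshape_mono)
next
  fix i j :: nat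
  assume "i < n" "j \<le> n"
  then show "SYT_growth n T i j \<subseteq> SYT_growth n T (i + 1) j"
    by (simp add: SYT_growth_def subshape_mono)
qed

lemma growth_id_eq_SYT_growth:
  assumes g: "is_growth n id L"
  shows "L = SYT_growth n (tabP n L)"
proof (intro ext)
  fix i j
  show "L i j = SYT_growth n (tabP n L) i j"
  proof (cases "i \<le> n \<and> j \<le> n")
    case True
    then have "L i j = L (min i j) (min i j)"
      using growth_id_eq_diagonal[OF g] by blast
    also have "\<dots> = subshape (tabP n L) (min i j)"
      using True subshape_tabP_growth_id[OF g, of "min i j"] by (simp add: min_le_iff_disj)
    finally show ?thesis
      using True by (simp add: SYT_growth_def)
  next
    case False
    then show ?thesis
      using is_growth_outside[OF g, of i j] by (auto simp: SYT_growth_def)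
  qed
qed

lemma tableaux_SYT_growth:
  assumes T: "is_SYT la T" and n: "card la = n"
  shows "tabP n (SYT_growth n T) = T" "tabQ n (SYT_growth n T) = T"
proof -
  have g: "is_growth n id (SYT_growth n T)"
    using T n by (rule is_growth_SYT_growth)
  have "chain_tableau n (\<lambda>k. SYT_growth n T k k) = chain_tableau n (subshape T)"
    by (rule chain_tableau_cong) (simp add: SYT_growth_def)
  also have "\<dots> = T"
    using SYT_entry_le[OF T] n by (intro chain_tableau_subshape) simp
  finally have diagonal: "chain_tableau n (\<lambda>k. SYT_growth n T k k) = T" .
  show "tabP n (SYT_growth n T) = T"
    using diagonal by (simp only: growth_id_tabP[OF g])
  show "tabQ n (SYT_growth n T) = T"
    using diagonal by (simp only: growth_id_tabQ[OF g])
qed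

lemma growths_id_with_tableaux:
  assumes P: "is_SYT la P" and n: "card la = n"
  shows "{L. is_growth n id L \<and> tabP n L = P \<and> tabQ n L = Q} =
    (if P = Q then {SYT_growth n P} else {})"
proof -
  have "P = Q \<and> L = SYT_growth n P"
    if g: "is_growth n id L" and "tabP n L = P" "tabQ n L = Q" for L
  proof
    show "P = Q"
      unfolding that(2)[symmetric] that(3)[symmetric] growth_id_tabP[OF g] growth_id_tabQ[OF g] ..
    show "L = SYT_growth n P"
      using growth_id_eq_SYT_growth[OF g] unfolding \<open>tabP n L = P\<close> .
  qed
  note unique = this
  show ?thesis
  proof (cases "P = Q")
    case True
    have "SYT_growth n P \<in> {L. is_growth n id L \<and> tabP n L = P \<and> tabQ n L = Q}"
      using True is_growth_SYT_growth[OF P n] tableaux_SYT_growth[OF P n] by simp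
    then show ?thesis
      unfolding if_P[OF True] using True unique by blast
  next
    case False
    then show ?thesis
      unfolding if_not_P[OF False] using unique by blast
  qed
qed

section \<open>Weight of the growth of a standard tableau\<close>

lemma subshape_in_Up:
  assumes T: "is_SYT la T" and "1 \<le> i" "i \<le> card la"
  shows "subshape T i \<in> Up (subshape T (i - 1))"
proof -
  have "subshape T (i - 1) \<subseteq> subshape T i"
    by (simp add: subshape_mono)
  moreover have "finite (subshape T i)"
    using is_partition_subshape[OF T] by (simp add: is_partition_def)
  ultimately have "card (subshape T i - subshape T (i - 1)) = 1"
    using assms by (simp add: card_Diff_subset finite_subset card_subshape)
  then show ?thesis
    using is_partition_subshape[OF T] \<open>subshape T (i - 1) \<subseteq> subshape T i\<close> by (simp add: Up_def)
qed

lemma square_prob_SYT_growth_off_diagonal: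
  assumes T: "is_SYT la T" and n: "card la = n"
    and "i \<noteq> j" "1 \<le> i" "i \<le> n" "1 \<le> j" "j \<le> n"
  shows "square_prob q t (SYT_growth n T) i j = 1"
proof -
  have "card (SYT_growth n T (i - 1) j) = min (i - 1) j"
    and "card (SYT_growth n T i (j - 1)) = min i (j - 1)"
    using assms by (simp_all add: SYT_growth_def card_subshape)
  moreover have "min (i - 1) j \<noteq> min i (j - 1)"
    using assms by linarith
  ultimately have "SYT_growth n T (i - 1) j \<noteq> SYT_growth n T i (j - 1)"
    by metis
  then show ?thesis
    by (simp add: square_prob_def Let_def)
qed

lemma square_prob_SYT_growth_diagonal:
  assumes T: "is_SYT la T" and n: "card la = n" and "1 \<le> i" "i \<le> n"
  shows "square_prob q t (SYT_growth n T) i i =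
    t powi nskew (subshape T i) (subshape T (i - 1)) * alpha q t (subshape T i) (subshape T (i - 1))"
proof -
  have "SYT_growth n T (i - 1) (i - 1) = subshape T (i - 1)"
    "SYT_growth n T (i - 1) i = subshape T (i - 1)"
    "SYT_growth n T i (i - 1) = subshape T (i - 1)"
    "SYT_growth n T i i = subshape T i"
    using assms by (simp_all add: SYT_growth_def)
  moreover have "subshape T i \<in> Up (subshape T (i - 1))"
    using subshape_in_Up[OF T] assms by simp
  ultimately show ?thesis
    by (simp add: square_prob_def local_prob_def Down_star_def Let_def)
qed

lemma prod_powi_nskew_subshape:
  fixes t :: "'a::field"
  assumes T: "is_SYT la T" and t: "t \<noteq> 0"
  shows "(\<Prod>i\<in>{1..card la}. t powi nskew (subshape T i) (subshape T (i - 1))) = t ^ nfun la"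
proof -
  have "(\<Prod>i\<in>{1..card la}. t powi nskew (subshape T i) (subshape T (i - 1))) =
      (\<Prod>i = Suc 0..card la. t ^ nfun (subshape T i) / t ^ nfun (subshape T (i - 1)))"
    using t by (simp add: nskew_def power_int_diff)
  also have "\<dots> = t ^ nfun (subshape T (card la)) / t ^ nfun (subshape T 0)"
    using t by (intro prod_telescope'') simp_all
  also have "\<dots> = t ^ nfun la"
    using subshape_card_eq_shape[OF T] by (simp add: nfun_def)
  finally show ?thesis .
qed

lemma growth_prob_SYT_growth:
  fixes q t :: "'a::field"
  assumes T: "is_SYT la T" and n: "card la = n" and t: "t \<noteq> 0"
  shows "growth_prob q t n (SYT_growth n T) =
    t ^ nfun la * (\<Prod>i\<in>{1..n}. alpha q t (subshape T i) (subshape T (i - 1)))"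
proof -
  let ?square = "square_prob q t (SYT_growth n T)"
  have row: "(\<Prod>j\<in>{1..n}. ?square i j) = ?square i i" if "i \<in> {1..n}" for i
  proof -
    have "(\<Prod>j\<in>{1..n}. ?square i j) = (\<Prod>j\<in>{1..n}. if i = j then ?square i i else 1)"
      using that square_prob_SYT_growth_off_diagonal[OF T n] by (intro prod.cong) auto
    also have "\<dots> = ?square i i"
      using that by (simp add: prod.delta')
    finally show ?thesis .
  qed
  then have "growth_prob q t n (SYT_growth n T) =
      (\<Prod>i\<in>{1..n}. t powi nskew (subshape T i) (subshape T (i - 1)) *
        alpha q t (subshape T i) (subshape T (i - 1)))"
    unfolding growth_prob_def
    using square_prob_SYT_growth_diagonal[OF T n] by (intro prod.cong) auto
  with prod_powi_nskew_subshape[OF T t] n show ?thesis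
    by (simp add: prod.distrib)
qed

theorem lemma4p29:
  fixes q t :: "'a::field" and n :: nat and la :: diagram and P Q :: "cell \<Rightarrow> nat"
  assumes "generic_qt q t"
    and "n \<ge> 1"
    and "is_partition la" and "card la = n"
    and "is_SYT la P" and "is_SYT la Q"
  shows "perm_prob q t n id P Q =
           (if P = Q then t ^ nfun la * (\<Prod>i\<in>{1..card la}. alpha q t (subshape P i) (subshape P (i - 1)))
            else 0)"
proof -
  have "t \<noteq> 0"
    using \<open>generic_qt q t\<close> by (simp add: generic_qt_def)
  then have "growth_prob q t n (SYT_growth n P) =
      t ^ nfun la * (\<Prod>i\<in>{1..n}. alpha q t (subshape P i) (subshape P (i - 1)))"
    using \<open>is_SYT la P\<close> \<open>card la = n\<close> by (intro growth_prob_SYT_growth)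
  then show ?thesis
    unfolding perm_prob_def growths_id_with_tableaux[OF \<open>is_SYT la P\<close> \<open>card la = n\<close>]
    using \<open>card la = n\<close> by (cases "P = Q") simp_all
qed

end
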